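(* Let $G=(U\cup W,E)$ be a finite bipartite graph with bipartition $(U,W)$ and let $\mathbf{I}^Y\in\{0,1\}^{\vec E}$ be defined by $I^Y_{\vec e}=1$ iff $\lim_{z\to\infty}Y_{\vec e}(z)=\infty$. Then the set $V(\mathbf{I}^Y)$ is a minimum vertex cover of $G$.
   Context: $\vec E$ denotes the directed edges, $\partial v$ the neighbours of $v$, empty sums are $0$. LABP: $m^0_{\vec e}(z)=0$, $m^{t+1}_{u\to v}(z)=z/(1+\sum_{w\in\partial u\setminus v}m^t_{w\to u}(z))$; $Y_{\vec e}(z)=\lim_t m^t_{\vec e}(z)$, which is non-decreasing in $z$. The map $\mathcal{P}_G:\{0,1\}^{\vec E}\to\{0,1\}^{\vec E}$ is $\mathcal{P}_G(\mathbf{I})_{u\to v}=\mathbf{1}(\sum_{w\in\partial u\setminus v}I_{w\to u}=0)$. For $\mathbf{I}\in\{0,1\}^{\vec E}$, the vertex set $V(\mathbf{I})$ is defined by: for $u\in U$, $u\in V(\mathbf{I})$ iff $\sum_{v\in\partial u}I_{v\to u}\ge1$; for $w\in W$, $w\in V(\mathbf{I})$ iff $\sum_{v\in\partial w}\mathcal{P}_G(\mathbf{I})_{v\to w}\ge2$. *)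

theory Defs
  imports Complex_Main
begin

text \<open>A finite bipartite graph with bipartition (U, W) is given by a set E of
  ordered pairs which is symmetric (so E is exactly the set of directed edges
  of the underlying undirected graph) and every edge joins U and W.\<close>

definition bipartite_graph :: "'a set \<Rightarrow> 'a set \<Rightarrow> ('a \<times> 'a) set \<Rightarrow> bool" where
  "bipartite_graph U W E \<longleftrightarrow> finite U \<and> finite W \<and> U \<inter> W = {} \<and>
     (\<forall>u v. (u, v) \<in> E \<longrightarrow> (v, u) \<in> E) \<and>
     (\<forall>u v. (u, v) \<in> E \<longrightarrow> (u \<in> U \<and> v \<in> W) \<or> (u \<in> W \<and> v \<in> U))"

definition nbrs :: "('a \<times> 'a) set \<Rightarrow> 'a \<Rightarrow> 'a set" where
  "nbrs E v = {w. (v, w) \<in> E}"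

fun labp :: "('a \<times> 'a) set \<Rightarrow> nat \<Rightarrow> real \<Rightarrow> 'a \<times> 'a \<Rightarrow> real" where
  "labp E 0 z e = 0"
| "labp E (Suc t) z (u, v) =
     z / (1 + (\<Sum>w\<in>nbrs E u - {v}. labp E t z (w, u)))"

definition Y :: "('a \<times> 'a) set \<Rightarrow> real \<Rightarrow> 'a \<times> 'a \<Rightarrow> real" where
  "Y E z e = lim (\<lambda>t. labp E t z e)"

definition PG :: "('a \<times> 'a) set \<Rightarrow> ('a \<times> 'a \<Rightarrow> nat) \<Rightarrow> 'a \<times> 'a \<Rightarrow> nat" where
  "PG E I e = (if (\<Sum>w\<in>nbrs E (fst e) - {snd e}. I (w, fst e)) = 0 then 1 else 0)"

definition Vset :: "'a set \<Rightarrow> 'a set \<Rightarrow> ('a \<times> 'a) set \<Rightarrow> ('a \<times> 'a \<Rightarrow> nat) \<Rightarrow> 'a set" where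
  "Vset U W E I =
     {u \<in> U. (\<Sum>v\<in>nbrs E u. I (v, u)) \<ge> 1} \<union>
     {w \<in> W. (\<Sum>v\<in>nbrs E w. PG E I (v, w)) \<ge> 2}"

definition IY :: "('a \<times> 'a) set \<Rightarrow> 'a \<times> 'a \<Rightarrow> nat" where
  "IY E e = (if filterlim (\<lambda>z. Y E z e) at_top at_top then 1 else 0)"

definition vertex_cover :: "'a set \<Rightarrow> ('a \<times> 'a) set \<Rightarrow> 'a set \<Rightarrow> bool" where
  "vertex_cover V E S \<longleftrightarrow> S \<subseteq> V \<and> (\<forall>u v. (u, v) \<in> E \<longrightarrow> u \<in> S \<or> v \<in> S)"

definition min_vertex_cover :: "'a set \<Rightarrow> ('a \<times> 'a) set \<Rightarrow> 'a set \<Rightarrow> bool" where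
  "min_vertex_cover V E S \<longleftrightarrow> vertex_cover V E S \<and>
     (\<forall>S'. vertex_cover V E S' \<longrightarrow> card S \<le> card S')"

end

theory Submission
  imports Defs
begin

text \<open>
  The update map is
  antitone, so even iterates increase, odd iterates decrease and both squeeze all later
  iterates; their limits form a 2-cycle of the update map, and a maximal-ratio argument
  shows that such a 2-cycle is a fixed point.  So Y(z) exists and solves the cavity
  equation; comparing two consecutive updates shows Y(z) is non-decreasing in z.
  (2) Asymptotics as z tends to infinity: a message grows linearly if its incoming messages
  stay bounded, is o(z) if one of them diverges, and diverges if all of them are o(z).
  (3) Covering: for an edge uw with u not in V, part (2) forces w into V.
  (4) Minimality: the monomer-dimer marginals built from Y(z) form a symmetric fractional
  matching; by weak LP duality its value is at most the size of any vertex cover, and by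
  part (2) it is at least |V| up to terms vanishing as z tends to infinity.
\<close>

lemma labp_nonneg:
  assumes "0 \<le> z"
  shows "0 \<le> labp E t z e"
proof (induction t arbitrary: e)
  case (Suc t)
  then show ?case using assms by (cases e) (simp add: sum_nonneg)
qed simp

lemma labp_le:
  assumes "0 \<le> z"
  shows "labp E t z e \<le> z"
proof (cases t)
  case (Suc s)
  obtain u v where e: "e = (u, v)" by fastforce
  have "0 \<le> (\<Sum>w\<in>nbrs E u - {v}. labp E s z (w, u))"
    using labp_nonneg[OF assms] by (intro sum_nonneg) blast
  then show ?thesis using assms by (simp add: Suc e divide_le_eq mult_le_cancel_left1)
qed (simp add: assms)

lemma labp_antitone:
  assumes "0 \<le> z" and le: "\<And>e. labp E s z e \<le> labp E t z e"
  shows "labp E (Suc t) z e \<le> labp E (Suc s) z e"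
proof (cases e)
  case (Pair u v)
  have "0 \<le> (\<Sum>w\<in>nbrs E u - {v}. labp E s z (w, u))"
    using labp_nonneg[OF assms(1)] by (intro sum_nonneg) blast
  moreover have "(\<Sum>w\<in>nbrs E u - {v}. labp E s z (w, u)) \<le> (\<Sum>w\<in>nbrs E u - {v}. labp E t z (w, u))"
    by (intro sum_mono le)
  ultimately show ?thesis using Pair assms(1) by (simp add: divide_left_mono)
qed

lemma labp_sandwich:
  assumes "0 \<le> z" and "2 * k \<le> t"
  shows "labp E (2 * k) z e \<le> labp E t z e \<and> labp E t z e \<le> labp E (Suc (2 * k)) z e"
  using assms(2)
proof (induction k arbitrary: t e)
  case 0
  have "labp E (Suc 0) z e = z" by (cases e) simp
  then show ?case using labp_nonneg[OF assms(1), of E t e] labp_le[OF assms(1), of E t e] by simp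
next
  case (Suc k)
  obtain s where t: "t = Suc (Suc s)" and s: "2 * k \<le> s"
    using Suc.prems by (intro that[of "t - 2"]) auto
  note IH = Suc.IH[OF s]
  have odd_le: "labp E (Suc s) z e' \<le> labp E (Suc (2 * k)) z e'" for e'
    by (rule labp_antitone[OF assms(1)]) (use IH in blast)
  have even_le: "labp E (Suc (Suc (2 * k))) z e' \<le> labp E (Suc s) z e'" for e'
    by (rule labp_antitone[OF assms(1)]) (use IH in blast)
  have "labp E (Suc (Suc (2 * k))) z e \<le> labp E t z e"
    unfolding t by (rule labp_antitone[OF assms(1) odd_le])
  moreover have "labp E t z e \<le> labp E (Suc (Suc (Suc (2 * k)))) z e"
    unfolding t by (rule labp_antitone[OF assms(1) even_le])
  ultimately show ?case by simp
qed

lemma labp_limit_step: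
  assumes "0 \<le> z" and lim: "\<And>e. (\<lambda>k. labp E (f k) z e) \<longlonglongrightarrow> L e"
  shows "(\<lambda>k. labp E (Suc (f k)) z (u, v)) \<longlonglongrightarrow> z / (1 + (\<Sum>w\<in>nbrs E u - {v}. L (w, u)))"
proof -
  have "0 \<le> L e" for e
    by (rule LIMSEQ_le_const[OF lim]) (use labp_nonneg[OF assms(1)] in blast)
  then have "0 \<le> (\<Sum>w\<in>nbrs E u - {v}. L (w, u))" by (intro sum_nonneg) blast
  then show ?thesis by simp (intro tendsto_intros lim, simp)
qed

text \<open>On reversed edges the maximal
  ratio hi/lo is at most 1 by the cavity equations; every message is an update of reversed-edge
  messages, so hi = lo everywhere.\<close>

lemma two_cycle_collapse:
  fixes lo hi :: "'a \<times> 'a \<Rightarrow> real"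
  assumes "finite E" and "0 < z"
    and lo_nonneg: "\<And>e. 0 \<le> lo e" and lo_le_hi: "\<And>e. lo e \<le> hi e"
    and lo_eq: "\<And>u v. lo (u, v) = z / (1 + (\<Sum>w\<in>nbrs E u - {v}. hi (w, u)))"
    and hi_eq: "\<And>u v. hi (u, v) = z / (1 + (\<Sum>w\<in>nbrs E u - {v}. lo (w, u)))"
  shows "hi = lo"
proof -
  have lo_pos: "0 < lo e" for e
  proof (cases e)
    case (Pair u v)
    have "0 \<le> (\<Sum>w\<in>nbrs E u - {v}. hi (w, u))"
      using lo_nonneg lo_le_hi by (intro sum_nonneg) (blast intro: order_trans)
    then show ?thesis using Pair lo_eq \<open>0 < z\<close> by simp
  qed
  define D where "D = converse E"
  have in_D: "(w, u) \<in> D" if "w \<in> nbrs E u" for w u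
    using that unfolding D_def nbrs_def by simp
  have on_D: "hi e \<le> lo e" if "e \<in> D" for e
  proof -
    define R where "R e = hi e / lo e" for e
    have fin: "finite (R ` D)" unfolding D_def using \<open>finite E\<close> by simp
    then have "Max (R ` D) \<in> R ` D" using that by (intro Max_in) auto
    then obtain a b where ab: "(a, b) \<in> D" and m: "R (a, b) = Max (R ` D)" by auto
    have max: "R e' \<le> R (a, b)" if "e' \<in> D" for e'
      unfolding m using fin that by simp
    define A where "A = nbrs E a - {b}"
    define Sl where "Sl = (\<Sum>w\<in>A. lo (w, a))"
    define Sh where "Sh = (\<Sum>w\<in>A. hi (w, a))"
    have "hi (w, a) \<le> R (a, b) * lo (w, a)" if "w \<in> A" for w
    proof -
      have "hi (w, a) / lo (w, a) \<le> R (a, b)"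
        using max[OF in_D] that unfolding A_def R_def by simp
      then show ?thesis using lo_pos[of "(w, a)"] by (simp add: divide_le_eq)
    qed
    then have Sh_le: "Sh \<le> R (a, b) * Sl"
      unfolding Sh_def Sl_def sum_distrib_left by (rule sum_mono)
    have "0 \<le> Sl" unfolding Sl_def using lo_nonneg by (simp add: sum_nonneg)
    moreover have "R (a, b) * (1 + Sl) = 1 + Sh"
    proof -
      have "0 \<le> Sh" unfolding Sh_def using lo_nonneg lo_le_hi by (intro sum_nonneg) (blast intro: order_trans)
      then show ?thesis using \<open>0 \<le> Sl\<close> \<open>0 < z\<close>
        unfolding R_def hi_eq[of a b] lo_eq[of a b] A_def[symmetric] Sl_def[symmetric] Sh_def[symmetric]
        by (simp add: divide_simps)
    qed
    ultimately have "R (a, b) \<le> 1" using Sh_le by (simp add: algebra_simps)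
    then have "R e \<le> 1" using max[OF that] by simp
    then show ?thesis using lo_pos[of e] unfolding R_def by (simp add: divide_le_eq)
  qed
  show ?thesis
  proof
    fix e :: "'a \<times> 'a"
    obtain u v where e: "e = (u, v)" by fastforce
    have "(\<Sum>w\<in>nbrs E u - {v}. lo (w, u)) = (\<Sum>w\<in>nbrs E u - {v}. hi (w, u))"
    proof (rule sum.cong)
      fix w assume "w \<in> nbrs E u - {v}"
      then show "lo (w, u) = hi (w, u)" using on_D[OF in_D] lo_le_hi by (simp add: order_antisym)
    qed simp
    then show "hi e = lo e" unfolding e hi_eq[of u v] lo_eq[of u v] by simp
  qed
qed

lemma LIMSEQ_even_odd:
  fixes X :: "nat \<Rightarrow> 'b::metric_space"
  assumes even: "(\<lambda>k. X (2 * k)) \<longlonglongrightarrow> L" and odd: "(\<lambda>k. X (Suc (2 * k))) \<longlonglongrightarrow> L"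
  shows "X \<longlonglongrightarrow> L"
proof (rule metric_LIMSEQ_I)
  fix r :: real assume "0 < r"
  obtain N1 where N1: "\<And>k. k \<ge> N1 \<Longrightarrow> dist (X (2 * k)) L < r"
    using metric_LIMSEQ_D[OF even \<open>0 < r\<close>] by blast
  obtain N2 where N2: "\<And>k. k \<ge> N2 \<Longrightarrow> dist (X (Suc (2 * k))) L < r"
    using metric_LIMSEQ_D[OF odd \<open>0 < r\<close>] by blast
  have "dist (X n) L < r" if "n \<ge> 2 * max N1 N2" for n
  proof -
    have "n div 2 \<ge> max N1 N2" using that by linarith
    then show ?thesis
      using N1[of "n div 2"] N2[of "n div 2"] by (cases "even n") (auto elim!: evenE oddE)
  qed
  then show "\<exists>N. \<forall>n\<ge>N. dist (X n) L < r" by blast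
qed

text \<open>Convergence of LABP for z > 0: the monotone even and odd subsequences have limits forming a
  2-cycle, which collapses by the previous lemma.\<close>

lemma labp_converges:
  assumes "finite E" and "0 < z"
  shows "(\<lambda>t. labp E t z e) \<longlonglongrightarrow> Y E z e"
proof -
  have z: "0 \<le> z" using assms(2) by simp
  have even_mono: "incseq (\<lambda>k. labp E (2 * k) z e')" for e'
  proof (rule incseq_SucI)
    show "labp E (2 * k) z e' \<le> labp E (2 * Suc k) z e'" for k
      using labp_sandwich[OF z, of k "2 * Suc k", where E = E and e = e'] by simp
  qed
  have odd_mono: "decseq (\<lambda>k. labp E (Suc (2 * k)) z e')" for e'
  proof (rule decseq_SucI)
    show "labp E (Suc (2 * Suc k)) z e' \<le> labp E (Suc (2 * k)) z e'" for k
      using labp_sandwich[OF z, of k "Suc (2 * Suc k)", where E = E and e = e'] by simp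
  qed
  define lo where "lo e' = lim (\<lambda>k. labp E (2 * k) z e')" for e'
  define hi where "hi e' = lim (\<lambda>k. labp E (Suc (2 * k)) z e')" for e'
  have lo: "(\<lambda>k. labp E (2 * k) z e') \<longlonglongrightarrow> lo e'" for e'
    using incseq_convergent[OF even_mono labp_le[OF z, THEN allI]]
    unfolding lo_def by (metis limI)
  have hi: "(\<lambda>k. labp E (Suc (2 * k)) z e') \<longlonglongrightarrow> hi e'" for e'
    using decseq_convergent[OF odd_mono labp_nonneg[OF z, THEN allI]]
    unfolding hi_def by (metis limI)
  have lo_shift: "(\<lambda>k. labp E (Suc (Suc (2 * k))) z e') \<longlonglongrightarrow> lo e'" for e'
    using LIMSEQ_Suc[OF lo] by simp
  have "hi = lo"
  proof (rule two_cycle_collapse[OF assms])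
    show "0 \<le> lo e'" for e'
      by (rule LIMSEQ_le_const[OF lo]) (simp add: labp_nonneg[OF z])
    show "lo e' \<le> hi e'" for e'
      by (rule LIMSEQ_le[OF lo hi]) (simp add: labp_sandwich[OF z order_refl])
    show "lo (u, v) = z / (1 + (\<Sum>w\<in>nbrs E u - {v}. hi (w, u)))" for u v
      using labp_limit_step[OF z, where f = "\<lambda>k. Suc (2 * k)" and L = hi, OF hi]
      by (rule LIMSEQ_unique[OF lo_shift])
    show "hi (u, v) = z / (1 + (\<Sum>w\<in>nbrs E u - {v}. lo (w, u)))" for u v
      using labp_limit_step[OF z, where f = "\<lambda>k. 2 * k" and L = lo, OF lo]
      by (rule LIMSEQ_unique[OF hi])
  qed
  then have "(\<lambda>k. labp E (Suc (2 * k)) z e) \<longlonglongrightarrow> lo e"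
    using hi[of e] by simp
  then have "(\<lambda>t. labp E t z e) \<longlonglongrightarrow> lo e"
    by (rule LIMSEQ_even_odd[OF lo])
  moreover from this have "Y E z e = lo e" unfolding Y_def by (rule limI)
  ultimately show ?thesis by simp
qed

lemma Y_fixed_point:
  assumes "finite E" and "0 < z"
  shows "Y E z (u, v) = z / (1 + (\<Sum>w\<in>nbrs E u - {v}. Y E z (w, u)))"
proof -
  have "(\<lambda>t. labp E (Suc t) z (u, v)) \<longlonglongrightarrow> Y E z (u, v)"
    using LIMSEQ_Suc[OF labp_converges[OF assms]] .
  moreover have "(\<lambda>t. labp E (Suc t) z (u, v)) \<longlonglongrightarrow> z / (1 + (\<Sum>w\<in>nbrs E u - {v}. Y E z (w, u)))"
    using labp_limit_step[of z E "\<lambda>t. t", OF _ labp_converges[OF assms]] assms(2) by simp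
  ultimately show ?thesis by (rule LIMSEQ_unique)
qed

lemma Y_nonneg:
  assumes "finite E" and "0 < z"
  shows "0 \<le> Y E z e"
  by (rule LIMSEQ_le_const[OF labp_converges[OF assms]]) (simp add: labp_nonneg less_imp_le[OF assms(2)])

lemma Y_sum_nonneg:
  assumes "finite E" and "0 < z"
  shows "0 \<le> (\<Sum>w\<in>A. Y E z (w, u))"
  using Y_nonneg[OF assms] by (simp add: sum_nonneg)

lemma Y_le_sum:
  assumes "finite E" and "0 < z" and "finite A" and "w \<in> A"
  shows "Y E z (w, u) \<le> (\<Sum>x\<in>A. Y E z (x, u))"
  using assms(3,4) Y_nonneg[OF assms(1,2)] by (intro member_le_sum) auto

text \<open>Two consecutive updates are monotone in z: written as 1 / (1/z + sum 1/(1 + a_w)), the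
  two-step map increases with z and with the messages a_w.\<close>

lemma two_step_mono:
  fixes a a' :: "'b \<Rightarrow> real"
  assumes "0 < z" and "z \<le> z'" and a: "\<And>w. w \<in> A \<Longrightarrow> 0 \<le> a w \<and> a w \<le> a' w"
  shows "z / (1 + (\<Sum>w\<in>A. z / (1 + a w))) \<le> z' / (1 + (\<Sum>w\<in>A. z' / (1 + a' w)))"
proof -
  have reciprocal: "c / (1 + (\<Sum>w\<in>A. c / (1 + b w))) = 1 / (1 / c + (\<Sum>w\<in>A. 1 / (1 + b w)))"
    if "0 < c" and b: "\<And>w. w \<in> A \<Longrightarrow> 0 \<le> b w" for c and b :: "'b \<Rightarrow> real"
  proof -
    have "(\<Sum>w\<in>A. c / (1 + b w)) = c * (\<Sum>w\<in>A. 1 / (1 + b w))" by (simp add: sum_distrib_left)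
    moreover have "0 \<le> (\<Sum>w\<in>A. 1 / (1 + b w))" using b by (intro sum_nonneg) simp
    ultimately show ?thesis using \<open>0 < c\<close> by (simp add: field_simps)
  qed
  have a': "0 \<le> a' w" if "w \<in> A" for w using a[OF that] by linarith
  define S S' where "S = (\<Sum>w\<in>A. 1 / (1 + a w))" and "S' = (\<Sum>w\<in>A. 1 / (1 + a' w))"
  have "S' \<le> S" unfolding S_def S'_def
  proof (rule sum_mono)
    fix w assume "w \<in> A"
    then have "0 \<le> a w" "a w \<le> a' w" using a by auto
    then show "1 / (1 + a' w) \<le> 1 / (1 + a w)" by (simp add: frac_le)
  qed
  moreover have "1 / z' \<le> 1 / z" using assms(1,2) by (simp add: frac_le)
  moreover have "0 < 1 / z' + S'"
    unfolding S'_def using a' assms(1,2) by (intro add_pos_nonneg sum_nonneg) auto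
  ultimately have "1 / (1 / z + S) \<le> 1 / (1 / z' + S')"
    by (intro divide_left_mono) (auto intro: mult_pos_pos)
  then show ?thesis
    unfolding S_def S'_def using a a' assms(1,2) by (subst (1 2) reciprocal) auto
qed

lemma labp_even_mono_in_z:
  assumes "0 < z" and "z \<le> z'"
  shows "labp E (2 * k) z e \<le> labp E (2 * k) z' e"
proof (induction k arbitrary: e)
  case (Suc k)
  obtain u v where e: "e = (u, v)" by fastforce
  have "labp E (Suc (Suc (2 * k))) z (u, v) \<le> labp E (Suc (Suc (2 * k))) z' (u, v)"
    by (simp only: labp.simps(2), rule two_step_mono[OF assms])
      (use Suc.IH in \<open>auto intro!: sum_nonneg sum_mono simp: labp_nonneg less_imp_le[OF assms(1)]\<close>)
  then show ?case using e by simp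
qed simp

lemma Y_mono:
  assumes "finite E" and "0 < z" and "z \<le> z'"
  shows "Y E z e \<le> Y E z' e"
proof -
  have even: "strict_mono (\<lambda>k::nat. 2 * k)" by (simp add: strict_mono_def)
  have conv: "(\<lambda>k. labp E (2 * k) z'' e) \<longlonglongrightarrow> Y E z'' e" if "0 < z''" for z''
    using LIMSEQ_subseq_LIMSEQ[OF labp_converges[OF assms(1) that] even] by (simp add: o_def)
  show ?thesis
    using assms(2,3) by (intro LIMSEQ_le[OF conv conv]) (auto simp: labp_even_mono_in_z)
qed

lemma finite_nbrs: "finite E \<Longrightarrow> finite (nbrs E u)"
  unfolding nbrs_def by (rule finite_subset[of _ "snd ` E"]) force+

lemma eventually_positive_at_top:
  assumes "\<And>z::real. 0 < z \<Longrightarrow> P z"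
  shows "\<forall>\<^sub>F z in at_top. P z"
  unfolding eventually_at_top_linorder using assms by (intro exI[of _ 1]) auto

definition diverges :: "('a \<times> 'a) set \<Rightarrow> 'a \<times> 'a \<Rightarrow> bool" where
  "diverges E e \<longleftrightarrow> filterlim (\<lambda>z. Y E z e) at_top at_top"

text \<open>By monotonicity in z, a message that does not diverge stays bounded.\<close>

lemma bounded_unless_diverges:
  assumes "finite E" and "\<not> diverges E e"
  shows "\<exists>C. \<forall>z>0. Y E z e \<le> C"
proof (rule ccontr)
  assume "\<nexists>C. \<forall>z>0. Y E z e \<le> C"
  then have unbounded: "\<exists>z>0. C < Y E z e" for C by (auto simp: not_le)
  have "diverges E e" unfolding diverges_def filterlim_at_top
  proof
    fix C :: real
    obtain z0 where z0: "0 < z0" "C < Y E z0 e" using unbounded by blast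
    show "\<forall>\<^sub>F z in at_top. C \<le> Y E z e"
      using eventually_ge_at_top[of z0]
    proof eventually_elim
      fix z assume "z0 \<le> z"
      then have "Y E z0 e \<le> Y E z e" by (rule Y_mono[OF assms(1) z0(1)])
      then show "C \<le> Y E z e" using z0(2) by linarith
    qed
  qed
  with assms(2) show False ..
qed

lemma linear_growth_diverges:
  assumes "0 < c" and "\<And>z. 0 < z \<Longrightarrow> c * z \<le> Y E z e"
  shows "diverges E e"
  unfolding diverges_def
proof (rule filterlim_at_top_mono)
  show "filterlim (\<lambda>z. c * z) at_top (at_top :: real filter)"
    by (rule filterlim_tendsto_pos_mult_at_top[OF tendsto_const assms(1) filterlim_ident])
  show "\<forall>\<^sub>F z in at_top. c * z \<le> Y E z e"
    using assms(2) by (rule eventually_positive_at_top)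
qed

lemma linear_growth_if_inputs_bounded:
  assumes "finite E" and bounded: "\<And>w. w \<in> nbrs E u - {v} \<Longrightarrow> \<not> diverges E (w, u)"
  shows "\<exists>c>0. \<forall>z>0. c * z \<le> Y E z (u, v)"
proof -
  define A where "A = nbrs E u - {v}"
  have "\<forall>w\<in>A. \<exists>C. \<forall>z>0. Y E z (w, u) \<le> C"
    using bounded_unless_diverges[OF assms(1) bounded] unfolding A_def by blast
  then obtain C where C: "\<And>w z. w \<in> A \<Longrightarrow> 0 < z \<Longrightarrow> Y E z (w, u) \<le> C w"
    by metis
  define K where "K = (\<Sum>w\<in>A. C w)"
  have "0 \<le> C w" if "w \<in> A" for w
    using C[OF that, of 1] Y_nonneg[OF assms(1), of 1 "(w, u)"] by simp
  then have "0 \<le> K" unfolding K_def by (rule sum_nonneg)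
  have "z / (1 + K) \<le> Y E z (u, v)" if "0 < z" for z
  proof -
    have "(\<Sum>w\<in>A. Y E z (w, u)) \<le> K" unfolding K_def using C that by (intro sum_mono) auto
    moreover have "0 \<le> (\<Sum>w\<in>A. Y E z (w, u))" by (rule Y_sum_nonneg[OF assms(1) that])
    ultimately show ?thesis unfolding Y_fixed_point[OF assms(1) that, of u v] A_def[symmetric]
      using that by (intro divide_left_mono) auto
  qed
  then show ?thesis using \<open>0 \<le> K\<close> by (intro exI[of _ "1 / (1 + K)"]) auto
qed

lemma inverse_sum_tendsto_0:
  assumes "finite E" and "finite A" and "w \<in> A" and "diverges E (w, u)"
  shows "((\<lambda>z. 1 / (1 + (\<Sum>x\<in>A. Y E z (x, u)))) \<longlongrightarrow> 0) at_top"
proof -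
  have "filterlim (\<lambda>z. \<Sum>x\<in>A. Y E z (x, u)) at_top at_top"
    using assms(4) unfolding diverges_def
    by (rule filterlim_at_top_mono) (intro eventually_positive_at_top Y_le_sum assms(1-3))
  then show ?thesis unfolding inverse_eq_divide[symmetric]
    by (intro tendsto_inverse_0_at_top filterlim_tendsto_add_at_top[OF tendsto_const])
qed

lemma sublinear_if_input_diverges:
  assumes "finite E" and w: "w \<in> nbrs E u - {v}" and "diverges E (w, u)"
  shows "((\<lambda>z. Y E z (u, v) / z) \<longlongrightarrow> 0) at_top"
proof -
  have "((\<lambda>z. 1 / (1 + (\<Sum>x\<in>nbrs E u - {v}. Y E z (x, u)))) \<longlongrightarrow> 0) at_top"
    using finite_nbrs[OF assms(1)] by (intro inverse_sum_tendsto_0[OF assms(1) _ w assms(3)]) simp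
  moreover have "\<forall>\<^sub>F z in at_top. 1 / (1 + (\<Sum>x\<in>nbrs E u - {v}. Y E z (x, u))) = Y E z (u, v) / z"
    by (rule eventually_positive_at_top) (simp add: Y_fixed_point[OF assms(1), of _ u v])
  ultimately show ?thesis by (rule Lim_transform_eventually)
qed

lemma diverges_if_inputs_sublinear:
  assumes "finite E"
    and sublinear: "\<And>w. w \<in> nbrs E u - {v} \<Longrightarrow> ((\<lambda>z. Y E z (w, u) / z) \<longlongrightarrow> 0) at_top"
  shows "diverges E (u, v)"
proof -
  define f where "f z = 1 / z + (\<Sum>w\<in>nbrs E u - {v}. Y E z (w, u) / z)" for z :: real
  have "((\<lambda>z::real. 1 / z) \<longlongrightarrow> 0) at_top"
    by (rule tendsto_divide_0[OF tendsto_const filterlim_at_top_imp_at_infinity[OF filterlim_ident]])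
  then have "(f \<longlongrightarrow> 0 + 0) at_top"
    unfolding f_def using sublinear by (intro tendsto_add tendsto_null_sum)
  then have f_lim: "(f \<longlongrightarrow> 0) at_top" by simp
  have "0 < f z \<and> inverse (f z) = Y E z (u, v)" if "0 < z" for z
  proof -
    have "0 \<le> (\<Sum>w\<in>nbrs E u - {v}. Y E z (w, u))" by (rule Y_sum_nonneg[OF assms(1) that])
    moreover have "f z = (1 + (\<Sum>w\<in>nbrs E u - {v}. Y E z (w, u))) / z"
      unfolding f_def by (simp add: add_divide_distrib sum_divide_distrib)
    ultimately show ?thesis unfolding Y_fixed_point[OF assms(1) that, of u v] using that by simp
  qed
  then have ev: "\<forall>\<^sub>F z in at_top. 0 < f z \<and> inverse (f z) = Y E z (u, v)"
    by (rule eventually_positive_at_top)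
  have "filterlim (\<lambda>z. inverse (f z)) at_top at_top"
    by (rule filterlim_inverse_at_top[OF f_lim]) (rule eventually_mono[OF ev], simp)
  moreover have "\<forall>\<^sub>F z in at_top. inverse (f z) = Y E z (u, v)"
    by (rule eventually_mono[OF ev]) simp
  ultimately show ?thesis
    unfolding diverges_def by (rule filterlim_cong[OF refl refl, THEN iffD1, rotated])
qed

lemma bounded_if_input_linear:
  assumes "finite E" and v: "v \<in> nbrs E w - {u}" and "0 < c"
    and linear: "\<And>z. 0 < z \<Longrightarrow> c * z \<le> Y E z (v, w)" and "0 < z"
  shows "Y E z (w, u) \<le> 1 / c"
proof -
  define S where "S = (\<Sum>x\<in>nbrs E w - {u}. Y E z (x, w))"
  have "Y E z (v, w) \<le> S"
    unfolding S_def using Y_le_sum[OF assms(1,5) _ v] finite_nbrs[OF assms(1)] by simp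
  then have cz: "c * z \<le> S" using linear[OF assms(5)] by linarith
  have pos: "0 < 1 + c * z" using assms(3,5) by (simp add: add_pos_pos)
  have "Y E z (w, u) = z / (1 + S)" unfolding S_def by (rule Y_fixed_point[OF assms(1,5)])
  also have "\<dots> \<le> z / (1 + c * z)"
    using cz pos assms(5) by (intro divide_left_mono) auto
  also have "\<dots> \<le> 1 / c"
    using pos assms(3) by (simp add: pos_divide_le_eq field_simps)
  finally show ?thesis .
qed

lemma bipartite_graphD:
  assumes "bipartite_graph U W E"
  shows "finite U" and "finite W" and "U \<inter> W = {}" and "finite E"
    and "(a, b) \<in> E \<Longrightarrow> (b, a) \<in> E"
    and "(a, b) \<in> E \<Longrightarrow> a \<in> U \<and> b \<in> W \<or> a \<in> W \<and> b \<in> U"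
proof -
  show "finite U" "finite W" "U \<inter> W = {}" using assms unfolding bipartite_graph_def by auto
  show "(a, b) \<in> E \<Longrightarrow> (b, a) \<in> E"
    and "(a, b) \<in> E \<Longrightarrow> a \<in> U \<and> b \<in> W \<or> a \<in> W \<and> b \<in> U"
    using assms unfolding bipartite_graph_def by blast+
  have "E \<subseteq> (U \<union> W) \<times> (U \<union> W)" using assms unfolding bipartite_graph_def by auto
  then show "finite E" by (rule finite_subset) (simp add: \<open>finite U\<close> \<open>finite W\<close>)
qed

lemma bipartite_nbrs:
  assumes "bipartite_graph U W E"
  shows "u \<in> U \<Longrightarrow> nbrs E u \<subseteq> W" and "w \<in> W \<Longrightarrow> nbrs E w \<subseteq> U"
  using bipartite_graphD(3,6)[OF assms] unfolding nbrs_def by blast+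

text \<open>The message v -> w is unblocked (P_G(I^Y) = 1) if no message into v other than from w diverges.\<close>

definition unblocked :: "('a \<times> 'a) set \<Rightarrow> 'a \<Rightarrow> 'a \<Rightarrow> bool" where
  "unblocked E v w \<longleftrightarrow> (\<forall>x\<in>nbrs E v - {w}. \<not> diverges E (x, v))"

lemma IY_eq: "IY E e = of_bool (diverges E e)"
  unfolding IY_def diverges_def by simp

lemma PG_IY:
  assumes "finite E"
  shows "PG E (IY E) (v, w) = of_bool (unblocked E v w)"
  using finite_nbrs[OF assms, of v] unfolding PG_def IY_eq unblocked_def by auto

lemma Vset_IY_U:
  assumes "U \<inter> W = {}" and "finite E" and "u \<in> U"
  shows "u \<in> Vset U W E (IY E) \<longleftrightarrow> (\<exists>v\<in>nbrs E u. diverges E (v, u))"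
proof -
  have "u \<notin> W" using assms(1,3) by blast
  moreover have "(\<Sum>v\<in>nbrs E u. IY E (v, u)) = card {v\<in>nbrs E u. diverges E (v, u)}"
    using finite_nbrs[OF assms(2), of u] by (simp add: IY_eq Int_def)
  ultimately show ?thesis
    using assms(3) finite_nbrs[OF assms(2), of u] unfolding Vset_def by (auto simp: Suc_le_eq card_gt_0_iff)
qed

lemma Vset_IY_W:
  assumes "U \<inter> W = {}" and "finite E" and "w \<in> W"
  shows "w \<in> Vset U W E (IY E) \<longleftrightarrow> 2 \<le> card {v\<in>nbrs E w. unblocked E v w}"
proof -
  have "(\<Sum>v\<in>nbrs E w. PG E (IY E) (v, w)) = card {v\<in>nbrs E w. unblocked E v w}"
    using finite_nbrs[OF assms(2), of w] by (simp add: PG_IY[OF assms(2)] Int_def)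
  then show ?thesis using assms(1,3) unfolding Vset_def by auto
qed

lemma unblocked_linear_growth:
  assumes "finite E" and "unblocked E v w"
  shows "\<exists>c>0. \<forall>z>0. c * z \<le> Y E z (v, w)"
  using assms unfolding unblocked_def by (intro linear_growth_if_inputs_bounded) auto

lemma sublinear_unless_unblocked:
  assumes "finite E" and "\<not> unblocked E v w"
  shows "((\<lambda>z. Y E z (v, w) / z) \<longlongrightarrow> 0) at_top"
  using assms unfolding unblocked_def by (auto intro: sublinear_if_input_diverges)

text \<open>If u is not in V, no message into u diverges, so u -> w is unblocked.  If w were not
  in V either, every other message into w would be blocked, hence o(z), so w -> u would
  diverge, contradicting u not in V.\<close>

lemma IY_covers_edge:
  assumes bip: "bipartite_graph U W E" and "u \<in> U" and uw: "(u, w) \<in> E"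
    and "u \<notin> Vset U W E (IY E)"
  shows "w \<in> Vset U W E (IY E)"
proof (rule ccontr)
  assume w_out: "w \<notin> Vset U W E (IY E)"
  note G = bipartite_graphD[OF bip]
  have "w \<in> W" using G(3) G(6)[OF uw] \<open>u \<in> U\<close> by blast
  have quiet: "\<not> diverges E (x, u)" if "x \<in> nbrs E u" for x
    using assms(4) that Vset_IY_U[OF G(3,4) \<open>u \<in> U\<close>] by blast
  have "u \<in> nbrs E w" using G(5)[OF uw] unfolding nbrs_def by simp
  have "\<not> unblocked E v w" if "v \<in> nbrs E w - {u}" for v
  proof
    assume "unblocked E v w"
    moreover have "unblocked E u w" using quiet unfolding unblocked_def by blast
    ultimately have "{u, v} \<subseteq> {v\<in>nbrs E w. unblocked E v w}"
      using that \<open>u \<in> nbrs E w\<close> by blast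
    then have "card {u, v} \<le> card {v\<in>nbrs E w. unblocked E v w}"
      using finite_nbrs[OF G(4)] by (intro card_mono) auto
    then show False
      using that w_out Vset_IY_W[OF G(3,4) \<open>w \<in> W\<close>] by auto
  qed
  then have "diverges E (w, u)"
    using G(4) by (intro diverges_if_inputs_sublinear sublinear_unless_unblocked)
  moreover have "w \<in> nbrs E u" using uw unfolding nbrs_def by simp
  ultimately show False using quiet by blast
qed

text \<open>Every edge has an endpoint in U, so V(I^Y) is a vertex cover.\<close>

lemma IY_vertex_cover:
  assumes bip: "bipartite_graph U W E"
  shows "vertex_cover (U \<union> W) E (Vset U W E (IY E))"
  unfolding vertex_cover_def
proof (intro conjI allI impI)
  show "Vset U W E (IY E) \<subseteq> U \<union> W" unfolding Vset_def by auto
  fix a b assume ab: "(a, b) \<in> E"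
  note G = bipartite_graphD[OF bip]
  from G(6)[OF ab] show "a \<in> Vset U W E (IY E) \<or> b \<in> Vset U W E (IY E)"
    using IY_covers_edge[OF bip _ ab] IY_covers_edge[OF bip _ G(5)[OF ab]] by blast
qed

lemma sum_sum_restrict:
  fixes g :: "'a \<Rightarrow> 'b \<Rightarrow> real"
  assumes "finite U" and "finite W"
  shows "(\<Sum>u\<in>U \<inter> A. \<Sum>w\<in>W \<inter> B. g u w) = (\<Sum>u\<in>U. \<Sum>w\<in>W. of_bool (u \<in> A \<and> w \<in> B) * g u w)"
  unfolding sum.inter_restrict[OF assms(1)] sum.inter_restrict[OF assms(2)]
  by (auto intro!: sum.cong)

lemma fractional_matching_le_cover:
  fixes g :: "'a \<Rightarrow> 'b \<Rightarrow> real"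
  assumes "finite U" and "finite W"
    and nonneg: "\<And>u w. u \<in> U \<Longrightarrow> w \<in> W \<Longrightarrow> 0 \<le> g u w"
    and row: "\<And>u. u \<in> U \<Longrightarrow> (\<Sum>w\<in>W. g u w) \<le> 1"
    and col: "\<And>w. w \<in> W \<Longrightarrow> (\<Sum>u\<in>U. g u w) \<le> 1"
    and cover: "\<And>u w. u \<in> U \<Longrightarrow> w \<in> W \<Longrightarrow> g u w \<noteq> 0 \<Longrightarrow> u \<in> C \<or> w \<in> D"
  shows "(\<Sum>u\<in>U. \<Sum>w\<in>W. g u w) \<le> real (card (U \<inter> C) + card (W \<inter> D))"
proof -
  have "(\<Sum>u\<in>U. \<Sum>w\<in>W. g u w)
      \<le> (\<Sum>u\<in>U. \<Sum>w\<in>W. of_bool (u \<in> C \<and> w \<in> UNIV) * g u w + of_bool (u \<in> UNIV \<and> w \<in> D) * g u w)"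
    using nonneg cover by (intro sum_mono) (fastforce simp: of_bool_def)
  also have "\<dots> = (\<Sum>u\<in>U \<inter> C. \<Sum>w\<in>W. g u w) + (\<Sum>w\<in>W \<inter> D. \<Sum>u\<in>U. g u w)"
    using sum_sum_restrict[OF assms(1,2), where A = C and B = UNIV and g = g] sum_sum_restrict[OF assms(1,2), where A = UNIV and B = D and g = g]
    by (simp add: sum.distrib sum.swap[of _ "W \<inter> D"])
  also have "\<dots> \<le> (\<Sum>u\<in>U \<inter> C. 1) + (\<Sum>w\<in>W \<inter> D. 1)"
    using row col by (intro add_mono sum_mono) auto
  finally show ?thesis by simp
qed

lemma fractional_matching_ge_restricted:
  fixes g :: "'a \<Rightarrow> 'b \<Rightarrow> real"
  assumes "finite U" and "finite W" and nonneg: "\<And>u w. u \<in> U \<Longrightarrow> w \<in> W \<Longrightarrow> 0 \<le> g u w"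
  shows "(\<Sum>u\<in>U \<inter> C. \<Sum>w\<in>W. g u w) + (\<Sum>w\<in>W \<inter> D. \<Sum>u\<in>U. g u w)
           - (\<Sum>u\<in>U \<inter> C. \<Sum>w\<in>W \<inter> D. g u w) \<le> (\<Sum>u\<in>U. \<Sum>w\<in>W. g u w)"
proof -
  have "(\<Sum>u\<in>U \<inter> C. \<Sum>w\<in>W. g u w) + (\<Sum>w\<in>W \<inter> D. \<Sum>u\<in>U. g u w)
           - (\<Sum>u\<in>U \<inter> C. \<Sum>w\<in>W \<inter> D. g u w)
      = (\<Sum>u\<in>U. \<Sum>w\<in>W. of_bool (u \<in> C \<and> w \<in> UNIV) * g u w + of_bool (u \<in> UNIV \<and> w \<in> D) * g u w
           - of_bool (u \<in> C \<and> w \<in> D) * g u w)"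
    using sum_sum_restrict[OF assms(1,2), where A = C and B = UNIV and g = g] sum_sum_restrict[OF assms(1,2), where A = UNIV and B = D and g = g]
      sum_sum_restrict[OF assms(1,2), where A = C and B = D and g = g]
    by (simp add: sum.distrib sum_subtractf sum.swap[of _ "W \<inter> D"])
  also have "\<dots> \<le> (\<Sum>u\<in>U. \<Sum>w\<in>W. g u w)"
    using nonneg by (intro sum_mono) (auto simp: of_bool_def)
  finally show ?thesis .
qed

text \<open>The monomer-dimer marginals at activity z: the probability that x is unmatched, and that
  u is matched to w.  They form a symmetric fractional matching.\<close>

definition unmatched_prob :: "('a \<times> 'a) set \<Rightarrow> real \<Rightarrow> 'a \<Rightarrow> real" where
  "unmatched_prob E z x = 1 / (1 + (\<Sum>v\<in>nbrs E x. Y E z (v, x)))"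

definition match_prob :: "('a \<times> 'a) set \<Rightarrow> real \<Rightarrow> 'a \<Rightarrow> 'a \<Rightarrow> real" where
  "match_prob E z u w = of_bool ((u, w) \<in> E) * Y E z (w, u) * unmatched_prob E z u"

lemma unmatched_prob_nonneg:
  assumes "finite E" and "0 < z"
  shows "0 \<le> unmatched_prob E z x"
  using Y_sum_nonneg[OF assms] unfolding unmatched_prob_def by (simp add: add_nonneg_nonneg)

lemma match_prob_nonneg:
  assumes "finite E" and "0 < z"
  shows "0 \<le> match_prob E z u w"
  unfolding match_prob_def using Y_nonneg[OF assms] unmatched_prob_nonneg[OF assms] by simp

lemma match_prob_sum:
  assumes "finite E" and "0 < z" and "finite X" and "nbrs E u \<subseteq> X"
  shows "(\<Sum>w\<in>X. match_prob E z u w) = 1 - unmatched_prob E z u"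
proof -
  define S where "S = (\<Sum>v\<in>nbrs E u. Y E z (v, u))"
  have "0 \<le> S" unfolding S_def by (rule Y_sum_nonneg[OF assms(1,2)])
  have "(\<Sum>w\<in>X. match_prob E z u w) = (\<Sum>w\<in>X \<inter> nbrs E u. Y E z (w, u)) * unmatched_prob E z u"
    unfolding match_prob_def sum.inter_restrict[OF assms(3)] sum_distrib_right
    by (intro sum.cong) (auto simp: nbrs_def)
  also have "X \<inter> nbrs E u = nbrs E u" using assms(4) by blast
  also have "(\<Sum>w\<in>nbrs E u. Y E z (w, u)) * unmatched_prob E z u = 1 - unmatched_prob E z u"
    using \<open>0 \<le> S\<close> unfolding unmatched_prob_def S_def[symmetric] by (simp add: field_simps)
  finally show ?thesis .
qed

text \<open>Symmetry of the marginals, from the cavity equations of the two directions of an edge.\<close>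

lemma match_prob_sym:
  assumes "finite E" and "0 < z" and sym: "\<And>a b. (a, b) \<in> E \<Longrightarrow> (b, a) \<in> E"
  shows "match_prob E z u w = match_prob E z w u"
proof (cases "(u, w) \<in> E")
  case True
  then have "w \<in> nbrs E u" and "u \<in> nbrs E w" using sym unfolding nbrs_def by auto
  define a b where "a = Y E z (u, w)" and "b = Y E z (w, u)"
  define Su Sw where "Su = (\<Sum>v\<in>nbrs E u - {w}. Y E z (v, u))" and "Sw = (\<Sum>v\<in>nbrs E w - {u}. Y E z (v, w))"
  have "0 \<le> Su" "0 \<le> Sw" unfolding Su_def Sw_def by (rule Y_sum_nonneg[OF assms(1,2)])+
  have "0 \<le> a" "0 \<le> b" unfolding a_def b_def by (rule Y_nonneg[OF assms(1,2)])+
  have a: "a * (1 + Su) = z" and b: "b * (1 + Sw) = z"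
    unfolding a_def b_def Su_def Sw_def Y_fixed_point[OF assms(1,2), of u w] Y_fixed_point[OF assms(1,2), of w u]
    using \<open>0 \<le> Su\<close> \<open>0 \<le> Sw\<close> unfolding Su_def Sw_def by simp_all
  have "(\<Sum>v\<in>nbrs E u. Y E z (v, u)) = b + Su" and "(\<Sum>v\<in>nbrs E w. Y E z (v, w)) = a + Sw"
    unfolding a_def b_def Su_def Sw_def
    using sum.remove[OF finite_nbrs[OF assms(1)] \<open>w \<in> nbrs E u\<close>]
      sum.remove[OF finite_nbrs[OF assms(1)] \<open>u \<in> nbrs E w\<close>] by simp_all
  moreover have "b * (1 + (a + Sw)) = a * (1 + (b + Su))" using a b by (simp add: algebra_simps)
  ultimately show ?thesis
    using True sym[OF True] \<open>0 \<le> Su\<close> \<open>0 \<le> Sw\<close> \<open>0 \<le> a\<close> \<open>0 \<le> b\<close>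
    unfolding match_prob_def unmatched_prob_def a_def[symmetric] b_def[symmetric]
    by (simp add: divide_simps)
next
  case False
  then show ?thesis using sym unfolding match_prob_def by auto
qed

lemma unmatched_prob_tendsto_0:
  assumes "finite E" and "v \<in> nbrs E x" and "diverges E (v, x)"
  shows "((\<lambda>z. unmatched_prob E z x) \<longlongrightarrow> 0) at_top"
  unfolding unmatched_prob_def by (rule inverse_sum_tendsto_0[OF assms(1) finite_nbrs[OF assms(1)] assms(2,3)])

lemma match_prob_tendsto_0:
  assumes "finite E" and v: "v \<in> nbrs E w - {u}" and "unblocked E v w"
    and lim: "((\<lambda>z. unmatched_prob E z u) \<longlongrightarrow> 0) at_top"
  shows "((\<lambda>z. match_prob E z u w) \<longlongrightarrow> 0) at_top"
proof -
  obtain c where "0 < c" and linear: "\<And>z. 0 < z \<Longrightarrow> c * z \<le> Y E z (v, w)"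
    using unblocked_linear_growth[OF assms(1,3)] by blast
  have bounds: "0 \<le> match_prob E z u w \<and> match_prob E z u w \<le> 1 / c * unmatched_prob E z u"
    if "0 < z" for z
  proof -
    have r: "0 \<le> unmatched_prob E z u" by (rule unmatched_prob_nonneg[OF assms(1) that])
    have "match_prob E z u w \<le> Y E z (w, u) * unmatched_prob E z u"
      unfolding match_prob_def using Y_nonneg[OF assms(1) that, of "(w, u)"] r by auto
    also have "\<dots> \<le> 1 / c * unmatched_prob E z u"
      by (rule mult_right_mono[OF bounded_if_input_linear[OF assms(1) v \<open>0 < c\<close> linear that] r])
    finally show ?thesis using match_prob_nonneg[OF assms(1) that] by blast
  qed
  have "((\<lambda>z. 1 / c * unmatched_prob E z u) \<longlongrightarrow> 1 / c * 0) at_top"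
    by (intro tendsto_mult tendsto_const lim)
  then have upper: "((\<lambda>z. 1 / c * unmatched_prob E z u) \<longlongrightarrow> 0) at_top" by simp
  have "\<forall>\<^sub>F z in at_top. 0 \<le> match_prob E z u w"
    by (rule eventually_positive_at_top) (use bounds in blast)
  moreover have "\<forall>\<^sub>F z in at_top. match_prob E z u w \<le> 1 / c * unmatched_prob E z u"
    by (rule eventually_positive_at_top) (use bounds in blast)
  ultimately show ?thesis by (rule tendsto_sandwich[OF _ _ tendsto_const upper])
qed

lemma card_bipartition:
  assumes "finite U" and "finite W" and "U \<inter> W = {}" and "S \<subseteq> U \<union> W"
  shows "card S = card (U \<inter> S) + card (W \<inter> S)"
proof -
  have "S = (U \<inter> S) \<union> (W \<inter> S)" using assms(4) by blast
  moreover have "card ((U \<inter> S) \<union> (W \<inter> S)) = card (U \<inter> S) + card (W \<inter> S)"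
    using assms(1-3) by (intro card_Un_disjoint) auto
  ultimately show ?thesis by simp
qed

lemma Vset_IY_other_unblocked:
  assumes bip: "bipartite_graph U W E" and "w \<in> W" and "w \<in> Vset U W E (IY E)"
  shows "\<exists>v\<in>nbrs E w - {u}. unblocked E v w"
proof (rule ccontr)
  note G = bipartite_graphD[OF bip]
  assume "\<not> ?thesis"
  then have "{v\<in>nbrs E w. unblocked E v w} \<subseteq> {u}" by blast
  then have "card {v\<in>nbrs E w. unblocked E v w} \<le> card {u}" by (rule card_mono[rotated]) simp
  then show False using assms(3) Vset_IY_W[OF G(3,4) assms(2)] by simp
qed

lemma Vset_IY_diverging_input:
  assumes bip: "bipartite_graph U W E" and x: "x \<in> Vset U W E (IY E)"
  shows "\<exists>v\<in>nbrs E x. diverges E (v, x)"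
proof -
  note G = bipartite_graphD[OF bip]
  have "x \<in> U \<or> x \<in> W" using x unfolding Vset_def by blast
  then show ?thesis
  proof
    assume "x \<in> U"
    then show ?thesis using x Vset_IY_U[OF G(3,4)] by blast
  next
    assume "x \<in> W"
    then obtain v where v: "v \<in> nbrs E x" and "unblocked E v x"
      using Vset_IY_other_unblocked[OF bip _ x] by blast
    then obtain c where "0 < c" "\<forall>z>0. c * z \<le> Y E z (v, x)"
      using unblocked_linear_growth[OF G(4)] by blast
    then show ?thesis using v linear_growth_diverges by blast
  qed
qed

lemma match_prob_row_col_sums:
  assumes bip: "bipartite_graph U W E" and "0 < z"
  shows "u \<in> U \<Longrightarrow> (\<Sum>w\<in>W. match_prob E z u w) = 1 - unmatched_prob E z u"
    and "w \<in> W \<Longrightarrow> (\<Sum>u\<in>U. match_prob E z u w) = 1 - unmatched_prob E z w"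
proof -
  note G = bipartite_graphD[OF bip]
  show "u \<in> U \<Longrightarrow> (\<Sum>w\<in>W. match_prob E z u w) = 1 - unmatched_prob E z u"
    using G(2,4) bipartite_nbrs(1)[OF bip] by (intro match_prob_sum assms(2))
  assume "w \<in> W"
  have "(\<Sum>u\<in>U. match_prob E z u w) = (\<Sum>u\<in>U. match_prob E z w u)"
    by (rule sum.cong[OF refl match_prob_sym[OF G(4) assms(2) G(5)]])
  also have "\<dots> = 1 - unmatched_prob E z w"
    using G(1,4) bipartite_nbrs(2)[OF bip \<open>w \<in> W\<close>] by (intro match_prob_sum assms(2))
  finally show "(\<Sum>u\<in>U. match_prob E z u w) = 1 - unmatched_prob E z w" .
qed

lemma matching_value_le_cover:
  assumes bip: "bipartite_graph U W E" and C: "vertex_cover (U \<union> W) E C" and "0 < z"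
  shows "(\<Sum>u\<in>U. \<Sum>w\<in>W. match_prob E z u w) \<le> real (card C)"
proof -
  note G = bipartite_graphD[OF bip]
  note sums = match_prob_row_col_sums[OF bip assms(3)]
  have "(\<Sum>u\<in>U. \<Sum>w\<in>W. match_prob E z u w) \<le> real (card (U \<inter> C) + card (W \<inter> C))"
  proof (rule fractional_matching_le_cover[OF G(1,2)])
    show "0 \<le> match_prob E z u w" for u w by (rule match_prob_nonneg[OF G(4) assms(3)])
    show "(\<Sum>w\<in>W. match_prob E z u w) \<le> 1" if "u \<in> U" for u
      using sums(1)[OF that] unmatched_prob_nonneg[OF G(4) assms(3)] by simp
    show "(\<Sum>u\<in>U. match_prob E z u w) \<le> 1" if "w \<in> W" for w
      using sums(2)[OF that] unmatched_prob_nonneg[OF G(4) assms(3)] by simp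
    show "u \<in> C \<or> w \<in> C" if "match_prob E z u w \<noteq> 0" for u w
      using that C unfolding match_prob_def vertex_cover_def by (auto split: if_splits)
  qed
  also have "card (U \<inter> C) + card (W \<inter> C) = card C"
    using G(1-3) C unfolding vertex_cover_def by (intro card_bipartition[symmetric]) auto
  finally show ?thesis .
qed

text \<open>Lower bound: |V| is at most any bound on the matching value valid for all z > 0.  The value
  is at least LB(z), which tends to |V| because vertices of V are matched with probability
  tending to 1 and edges inside V carry vanishing weight.\<close>

lemma IY_card_le_matching_bound:
  fixes c :: real
  assumes bip: "bipartite_graph U W E"
    and bound: "\<And>z. 0 < z \<Longrightarrow> (\<Sum>u\<in>U. \<Sum>w\<in>W. match_prob E z u w) \<le> c"
  shows "real (card (Vset U W E (IY E))) \<le> c"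
proof -
  note G = bipartite_graphD[OF bip]
  define V where "V = Vset U W E (IY E)"
  define r where "r z x = unmatched_prob E z x" for z x
  define LB where "LB z = (\<Sum>u\<in>U \<inter> V. 1 - r z u) + (\<Sum>w\<in>W \<inter> V. 1 - r z w)
      - (\<Sum>u\<in>U \<inter> V. \<Sum>w\<in>W \<inter> V. match_prob E z u w)" for z
  have lower: "LB z \<le> c" if "0 < z" for z
  proof -
    note sums = match_prob_row_col_sums[OF bip that, folded r_def]
    have "(\<Sum>u\<in>U \<inter> V. \<Sum>w\<in>W. match_prob E z u w) = (\<Sum>u\<in>U \<inter> V. 1 - r z u)"
      using sums(1) by (intro sum.cong) auto
    moreover have "(\<Sum>w\<in>W \<inter> V. \<Sum>u\<in>U. match_prob E z u w) = (\<Sum>w\<in>W \<inter> V. 1 - r z w)"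
      using sums(2) by (intro sum.cong) auto
    ultimately show ?thesis
      using fractional_matching_ge_restricted[OF G(1,2), where g = "match_prob E z" and C = V and D = V]
        bound[OF that]
      unfolding LB_def by (simp add: match_prob_nonneg[OF G(4) that])
  qed
  have r_lim: "((\<lambda>z. r z x) \<longlongrightarrow> 0) at_top" if "x \<in> V" for x
    using Vset_IY_diverging_input[OF bip that[unfolded V_def]] unmatched_prob_tendsto_0[OF G(4)]
    unfolding r_def by blast
  have m_lim: "((\<lambda>z. match_prob E z u w) \<longlongrightarrow> 0) at_top"
    if u: "u \<in> U \<inter> V" and w: "w \<in> W \<inter> V" for u w
  proof -
    obtain v where "v \<in> nbrs E w - {u}" "unblocked E v w"
      using Vset_IY_other_unblocked[OF bip, of w u] w unfolding V_def by blast
    then show ?thesis using r_lim[of u] u unfolding r_def by (intro match_prob_tendsto_0[OF G(4)]) auto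
  qed
  have lim_U: "((\<lambda>z. \<Sum>u\<in>U \<inter> V. 1 - r z u) \<longlongrightarrow> (\<Sum>u\<in>U \<inter> V. 1 - 0)) at_top"
    using r_lim by (intro tendsto_sum tendsto_diff tendsto_const) auto
  have lim_W: "((\<lambda>z. \<Sum>w\<in>W \<inter> V. 1 - r z w) \<longlongrightarrow> (\<Sum>w\<in>W \<inter> V. 1 - 0)) at_top"
    using r_lim by (intro tendsto_sum tendsto_diff tendsto_const) auto
  have lim_UV: "((\<lambda>z. \<Sum>u\<in>U \<inter> V. \<Sum>w\<in>W \<inter> V. match_prob E z u w) \<longlongrightarrow> 0) at_top"
    using m_lim by (intro tendsto_null_sum) auto
  have "(LB \<longlongrightarrow> (\<Sum>u\<in>U \<inter> V. 1 - 0) + (\<Sum>w\<in>W \<inter> V. 1 - 0) - 0) at_top"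
    unfolding LB_def by (rule tendsto_diff[OF tendsto_add[OF lim_U lim_W] lim_UV])
  then have "(LB \<longlongrightarrow> real (card (U \<inter> V) + card (W \<inter> V))) at_top" by simp
  then have "real (card (U \<inter> V) + card (W \<inter> V)) \<le> c"
    by (rule tendsto_upperbound) (simp_all add: eventually_positive_at_top lower)
  moreover have "card V = card (U \<inter> V) + card (W \<inter> V)"
    using G(1-3) by (rule card_bipartition) (auto simp: V_def Vset_def)
  ultimately show ?thesis unfolding V_def by simp
qed

theorem proposition2:
  fixes U W :: "'a set" and E :: "('a \<times> 'a) set"
  assumes "bipartite_graph U W E"
  shows "min_vertex_cover (U \<union> W) E (Vset U W E (IY E))"
  unfolding min_vertex_cover_def
proof (intro conjI allI impI)
  show "vertex_cover (U \<union> W) E (Vset U W E (IY E))" by (rule IY_vertex_cover[OF assms])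
  fix C assume C: "vertex_cover (U \<union> W) E C"
  have "real (card (Vset U W E (IY E))) \<le> real (card C)"
    by (rule IY_card_le_matching_bound[OF assms matching_value_le_cover[OF assms C]])
  then show "card (Vset U W E (IY E)) \<le> card C" by simp
qed

end
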